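(* Let $S=S^\top\in\mathbb{R}^{p\times p}$ with $S>0$, let $V\in\mathbb{R}^{p\times r}$ be a full rank matrix with $r\le p$, and let $Q_V=Q_V^\top\in\mathbb{R}^{r\times r}$ satisfy $0\le Q_V\le V^\top SV$. Then there exists $Q=Q^\top\in\mathbb{R}^{p\times p}$ such that $0\le Q\le S$ and $V^\top QV=Q_V$. *)

theory Defs
  imports "HOL-Analysis.Analysis"
begin

definition symmetric_mat :: "real^'n^'n \<Rightarrow> bool" where
  "symmetric_mat A \<longleftrightarrow> transpose A = A"

definition pos_semidef :: "real^'n^'n \<Rightarrow> bool" where
  "pos_semidef A \<longleftrightarrow> symmetric_mat A \<and> (\<forall>x. 0 \<le> x \<bullet> (A *v x))"

definition pos_def :: "real^'n^'n \<Rightarrow> bool" where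
  "pos_def A \<longleftrightarrow> symmetric_mat A \<and> (\<forall>x. x \<noteq> 0 \<longrightarrow> 0 < x \<bullet> (A *v x))"

definition loewner_le :: "real^'n^'n \<Rightarrow> real^'n^'n \<Rightarrow> bool" where
  "loewner_le A B \<longleftrightarrow> pos_semidef (B - A)"

end

theory Submission
  imports Defs
begin

(* Since V is injective and S > 0, M = V^T S V is invertible, and
   Q = S V M^-1 QV M^-1 V^T S satisfies V^T Q V = QV. Congruence preserves the Loewner order,
   so Q <= S V M^-1 M M^-1 V^T S = S V M^-1 V^T S, and this last matrix lies below S because
   S - S V M^-1 V^T S = T^T S T with T = I - V M^-1 V^T S. *)

lemma transpose_add: "transpose (A + B) = transpose A + transpose (B :: 'a::ring^'n^'m)"
  by (simp add: transpose_def vec_eq_iff)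

lemma transpose_diff: "transpose (A - B) = transpose A - transpose (B :: 'a::ring^'n^'m)"
  by (simp add: transpose_def vec_eq_iff)

lemma matrix_diff_ldistrib: "A ** (B - C) = A ** B - A ** (C :: 'a::ring_1^'p^'n)"
  by (vector matrix_matrix_mult_def sum_subtractf[symmetric] algebra_simps)

lemma matrix_diff_rdistrib: "(A - B) ** C = A ** C - B ** (C :: 'a::ring_1^'p^'n)"
  by (vector matrix_matrix_mult_def sum_subtractf[symmetric] algebra_simps)

lemma inner_matrix_congruence:
  fixes A :: "real^'n^'m" and B :: "real^'m^'m"
  shows "x \<bullet> ((transpose A ** B ** A) *v x) = (A *v x) \<bullet> (B *v (A *v x))"
proof -
  have "x \<bullet> (transpose A *v y) = (A *v x) \<bullet> y" for y
    using dot_lmul_matrix[of x "transpose A" y] by simp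
  then show ?thesis
    unfolding matrix_vector_mul_assoc[symmetric] .
qed

lemma symmetric_mat_congruence:
  fixes A :: "real^'n^'m" and B :: "real^'m^'m"
  assumes "symmetric_mat B"
  shows "symmetric_mat (transpose A ** B ** A)"
  using assms by (simp add: symmetric_mat_def matrix_transpose_mul matrix_mul_assoc)

lemma pos_semidef_congruence:
  fixes A :: "real^'n^'m" and B :: "real^'m^'m"
  assumes "pos_semidef B"
  shows "pos_semidef (transpose A ** B ** A)"
  using assms by (simp add: pos_semidef_def symmetric_mat_congruence inner_matrix_congruence)

lemma pos_def_congruence:
  fixes A :: "real^'n^'m" and B :: "real^'m^'m"
  assumes "pos_def B" and "inj ((*v) A)"
  shows "pos_def (transpose A ** B ** A)"
proof -
  have "A *v x \<noteq> 0" if "x \<noteq> 0" for x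
    using assms(2) that by (metis injD matrix_vector_mult_0_right)
  then show ?thesis
    using assms(1) by (simp add: pos_def_def symmetric_mat_congruence inner_matrix_congruence)
qed

lemma pos_def_imp_pos_semidef:
  assumes "pos_def A"
  shows "pos_semidef A"
  using assms unfolding pos_def_def pos_semidef_def
  by (metis inner_zero_left order_le_less)

lemma pos_semidef_add:
  assumes "pos_semidef A" and "pos_semidef B"
  shows "pos_semidef (A + B)"
  using assms by (simp add: pos_semidef_def symmetric_mat_def transpose_add
      matrix_vector_mult_add_rdistrib inner_add_right add_nonneg_nonneg)

lemma loewner_le_trans:
  assumes "loewner_le A B" and "loewner_le B C"
  shows "loewner_le A C"
proof -
  have "C - A = (C - B) + (B - A)" by simp
  then show ?thesis
    using assms pos_semidef_add unfolding loewner_le_def by metis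
qed

lemma loewner_le_congruence:
  fixes A :: "real^'n^'m" and B C :: "real^'m^'m"
  assumes "loewner_le B C"
  shows "loewner_le (transpose A ** B ** A) (transpose A ** C ** A)"
proof -
  have "transpose A ** C ** A - transpose A ** B ** A = transpose A ** (C - B) ** A"
    by (simp add: matrix_diff_ldistrib matrix_diff_rdistrib)
  then show ?thesis
    using assms pos_semidef_congruence unfolding loewner_le_def by metis
qed

lemma congruence_left_inverse:
  fixes V :: "'a::comm_semiring_1^'m^'n" and W :: "'a^'n^'m"
  assumes "W ** V = mat 1"
  shows "transpose V ** (transpose W ** B ** W) ** V = B"
proof -
  have "transpose V ** (transpose W ** B ** W) ** V = transpose (W ** V) ** B ** (W ** V)"
    by (simp add: matrix_transpose_mul matrix_mul_assoc)
  then show ?thesis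
    using assms by simp
qed

lemma pos_def_invertible:
  assumes "pos_def (A :: real^'n^'n)"
  shows "invertible A"
proof -
  have "x = 0" if "A *v x = 0" for x
    using assms that unfolding pos_def_def by force
  then show ?thesis
    by (simp add: invertible_left_inverse matrix_left_invertible_ker)
qed

lemma symmetric_mat_inverse:
  assumes "symmetric_mat A" and "A ** A' = mat 1"
  shows "symmetric_mat (A' :: real^'n^'n)"
proof -
  have "transpose A' ** A = mat 1"
    using arg_cong[OF assms(2), of transpose] assms(1)
    by (simp add: matrix_transpose_mul symmetric_mat_def)
  then show ?thesis
    unfolding symmetric_mat_def
    by (metis assms(2) matrix_mul_assoc matrix_mul_lid matrix_mul_rid)
qed

lemma loewner_le_schur_complement:
  fixes S :: "real^'p^'p" and V :: "real^'r^'p"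
  assumes "pos_semidef S" and "symmetric_mat Mi"
    and inverse: "(transpose V ** S ** V) ** Mi = mat 1"
  shows "loewner_le (S ** V ** Mi ** transpose V ** S) S"
proof -
  define P where "P = S ** V ** Mi ** transpose V ** S"
  define K where "K = V ** Mi ** transpose V ** S"
  have St: "transpose S = S" and Mit: "transpose Mi = Mi"
    using assms(1,2) by (simp_all add: pos_semidef_def symmetric_mat_def)
  have KtS: "transpose K ** S = P" and SK: "S ** K = P"
    unfolding K_def P_def by (simp_all add: matrix_transpose_mul matrix_mul_assoc St Mit)
  have "transpose K ** S ** K = S ** V ** Mi ** ((transpose V ** S ** V) ** Mi) ** transpose V ** S"
    unfolding K_def by (simp add: matrix_transpose_mul matrix_mul_assoc St Mit)
  also have "\<dots> = P"
    unfolding inverse P_def by simp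
  finally have "P ** K = P"
    using KtS by simp
  then have "transpose (mat 1 - K) ** S ** (mat 1 - K) = S - P"
    by (simp add: transpose_diff matrix_diff_ldistrib matrix_diff_rdistrib KtS SK)
  then show ?thesis
    using pos_semidef_congruence[OF assms(1)] unfolding loewner_le_def P_def by metis
qed

theorem lemmaA3:
  fixes S :: "real^'p^'p" and V :: "real^'r^'p" and QV :: "real^'r^'r"
  assumes "symmetric_mat S" and "pos_def S"
    and "rank V = CARD('r)" and "CARD('r) \<le> CARD('p)"
    and "symmetric_mat QV"
    and "pos_semidef QV"
    and "loewner_le QV (transpose V ** S ** V)"
  shows "\<exists>Q :: real^'p^'p. symmetric_mat Q \<and> pos_semidef Q \<and> loewner_le Q S
           \<and> transpose V ** Q ** V = QV"
proof -
  define M where "M = transpose V ** S ** V"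
  have "pos_def M"
    unfolding M_def using assms(2,3) full_rank_injective pos_def_congruence by blast
  then obtain Mi where MMi: "M ** Mi = mat 1" and MiM: "Mi ** M = mat 1"
    using pos_def_invertible invertible_def by blast
  have "symmetric_mat Mi"
    using \<open>pos_def M\<close> MMi symmetric_mat_inverse pos_def_def by blast
  define W where "W = Mi ** transpose V ** S"
  define Q where "Q = transpose W ** QV ** W"
  have "pos_semidef Q"
    unfolding Q_def using assms(6) pos_semidef_congruence by blast
  moreover have "transpose V ** Q ** V = QV"
  proof -
    have "W ** V = mat 1"
      unfolding W_def using MiM M_def by (simp add: matrix_mul_assoc)
    then show ?thesis
      unfolding Q_def by (rule congruence_left_inverse)
  qed
  moreover have "loewner_le Q S"
  proof -
    have "transpose W ** M ** W = S ** V ** Mi ** (M ** Mi) ** transpose V ** S"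
      unfolding W_def M_def using assms(1) \<open>symmetric_mat Mi\<close>
      by (simp add: symmetric_mat_def matrix_transpose_mul matrix_mul_assoc)
    also have "\<dots> = S ** V ** Mi ** transpose V ** S"
      using MMi by simp
    finally have "loewner_le (transpose W ** M ** W) S"
      using loewner_le_schur_complement[OF pos_def_imp_pos_semidef[OF assms(2)] \<open>symmetric_mat Mi\<close>]
        MMi M_def by simp
    with loewner_le_congruence[OF assms(7)[folded M_def]] show ?thesis
      unfolding Q_def by (rule loewner_le_trans)
  qed
  ultimately show ?thesis
    using pos_semidef_def by blast
qed

end
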